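(* Let $g,h:[0,1]\to\mathbb{R}$ be piecewise continuous and strictly monotonic and regular. Let $0=a_{g,0}<a_{g,1}<\dots<a_{g,M_g}=1$ be the partition of $[0,1]$ given by the ordered turning points of $g$, and $0=a_{h,0}<\dots<a_{h,M_h}=1$ the analogous partition for $h$. Let $T_g=F_g\circ g$, $T_h=F_h\circ h$, where $F_g,F_h$ are the distribution functions of $g(U_0),h(U_0)$ for $U_0\sim\mathcal{U}(0,1)$, and let $S_{\max}=\{(u,v)\in[0,1]^2:T_g(u)=T_h(v)\}$ and $S_{\min}=\{(u,v)\in[0,1]^2:T_g(u)=1-T_h(v)\}$ be the support sets on which copulas attaining the maximum, respectively minimum, of $\rho_{\{g,h\}}$ are concentrated. Then for every $m_1\in\{1,\dots,M_g\}$, $m_2\in\{1,\dots,M_h\}$ and $S\in\{S_{\max},S_{\min}\}$: if the intersection of $S$ with the rectangle $(a_{g,m_1-1},a_{g,m_1})\times(a_{h,m_2-1},a_{h,m_2})$ is non-empty, then this intersection is a continuous and strictly monotonic curve on the rectangle (the graph of a continuous strictly monotonic function of $u$ on a subinterval of $(a_{g,m_1-1},a_{g,m_1})$).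
   Context: $\psi$ is piecewise continuous and strictly monotonic if there is a finite partition of $[0,1]$ such that $\psi$ is continuous and strictly monotonic on each open subinterval. $\psi$ is regular if it is continuous on $[0,1]$, continuously differentiable on $(0,1)$ with bounded derivative, and $\psi'(u)=0$ iff $u$ is a turning point (interior local extremum) of $\psi$. $\rho_{\{g,h\}}(X,Y)=\rho(g(F_X(X)),h(F_Y(Y)))$ (Pearson correlation). *)

theory Defs
  imports "HOL-Probability.Probability"
begin

definition turning_point :: "(real \<Rightarrow> real) \<Rightarrow> real \<Rightarrow> bool" where
  "turning_point psi u \<longleftrightarrow> 0 < u \<and> u < 1 \<and>
     (\<exists>e>0. (\<forall>w\<in>{0..1}. \<bar>w - u\<bar> < e \<longrightarrow> psi w \<le> psi u) \<or>
            (\<forall>w\<in>{0..1}. \<bar>w - u\<bar> < e \<longrightarrow> psi u \<le> psi w))"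

definition pw_cont_strict_mono :: "(real \<Rightarrow> real) \<Rightarrow> bool" where
  "pw_cont_strict_mono psi \<longleftrightarrow>
     (\<exists>(p :: nat \<Rightarrow> real) n. p 0 = 0 \<and> p n = 1 \<and> (\<forall>i<n. p i < p (Suc i)) \<and>
        (\<forall>i<n. continuous_on {p i<..<p (Suc i)} psi \<and>
               (strict_mono_on {p i<..<p (Suc i)} psi \<or> strict_antimono_on {p i<..<p (Suc i)} psi)))"

definition regular :: "(real \<Rightarrow> real) \<Rightarrow> bool" where
  "regular psi \<longleftrightarrow> continuous_on {0..1} psi \<and>
     (\<forall>u\<in>{0<..<1}. psi differentiable (at u)) \<and>
     continuous_on {0<..<1} (deriv psi) \<and>
     (\<exists>B. \<forall>u\<in>{0<..<1}. \<bar>deriv psi u\<bar> \<le> B) \<and>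
     (\<forall>u\<in>{0<..<1}. deriv psi u = 0 \<longleftrightarrow> turning_point psi u)"

definition tp_points :: "(real \<Rightarrow> real) \<Rightarrow> real set" where
  "tp_points psi = {0, 1} \<union> {u. turning_point psi u}"

definition tp_num :: "(real \<Rightarrow> real) \<Rightarrow> nat" where
  "tp_num psi = card (tp_points psi) - 1"

definition tp_part :: "(real \<Rightarrow> real) \<Rightarrow> nat \<Rightarrow> real" where
  "tp_part psi i = sorted_list_of_set (tp_points psi) ! i"

definition unif01 :: "real measure" where
  "unif01 = restrict_space lborel {0..1}"

definition distfun :: "(real \<Rightarrow> real) \<Rightarrow> real \<Rightarrow> real" where
  "distfun psi = cdf (distr unif01 borel psi)"

definition Tfun :: "(real \<Rightarrow> real) \<Rightarrow> real \<Rightarrow> real" where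
  "Tfun psi u = distfun psi (psi u)"

definition S_max :: "(real \<Rightarrow> real) \<Rightarrow> (real \<Rightarrow> real) \<Rightarrow> (real \<times> real) set" where
  "S_max g h = {(u, v). u \<in> {0..1} \<and> v \<in> {0..1} \<and> Tfun g u = Tfun h v}"

definition S_min :: "(real \<Rightarrow> real) \<Rightarrow> (real \<Rightarrow> real) \<Rightarrow> (real \<times> real) set" where
  "S_min g h = {(u, v). u \<in> {0..1} \<and> v \<in> {0..1} \<and> Tfun g u = 1 - Tfun h v}"

end

(*
  Between consecutive turning points a regular function has no critical point, so by Rolle's
  theorem it is injective there, hence strictly monotone.  A piecewise strictly monotone function
  has finite level sets, so the distribution function F of psi(U_0) has no atoms and is continuous,
  and F strictly increases between two values that psi takes on an interval of positive length.
  Consequently T_g on the g-interval and T_h, 1 - T_h on the h-interval are continuous and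
  injective.  The part of S_max or S_min in the rectangle is therefore {(u, v). T_g u = k v} with
  k continuous and injective on an open interval: it is the graph of k^-1 o T_g over the interval
  of those u with T_g u in the range of k, and this map is continuous and injective, hence
  strictly monotone.
*)

theory Submission
  imports Defs
begin

lemma partition_cover:
  fixes p :: "nat \<Rightarrow> real"
  assumes "p 0 \<le> w" "w \<le> p n"
  shows "w \<in> p ` {..n} \<union> (\<Union>i<n. {p i<..<p (Suc i)})"
  using assms
proof (induction n)
  case (Suc n)
  show ?case
  proof (cases "w \<le> p n")
    case True
    with Suc show ?thesis by (auto simp: less_Suc_eq le_Suc_eq)
  next
    case False
    show ?thesis
    proof (cases "w = p (Suc n)")
      case False
      with \<open>\<not> w \<le> p n\<close> Suc.prems have "w \<in> {p n<..<p (Suc n)}" by auto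
      then show ?thesis by blast
    qed blast
  qed
qed simp

lemma pw_cont_strict_mono_finite_level_set:
  assumes "pw_cont_strict_mono g"
  shows "finite (g -` {y} \<inter> {0..1})"
proof -
  obtain p n where p: "p 0 = 0" "p n = 1"
    and pieces: "\<forall>i<n. continuous_on {p i<..<p (Suc i)} g \<and>
      (strict_mono_on {p i<..<p (Suc i)} g \<or> strict_antimono_on {p i<..<p (Suc i)} g)"
    using assms unfolding pw_cont_strict_mono_def by blast
  have inj: "inj_on g {p i<..<p (Suc i)}" if "i < n" for i
    using pieces that injective_eq_monotone_map[of "{p i<..<p (Suc i)}" g] by auto
  have "g -` {y} \<inter> {0..1} \<subseteq> p ` {..n} \<union> (\<Union>i<n. g -` {y} \<inter> {p i<..<p (Suc i)})"
    using partition_cover[of p _ n] p by fastforce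
  moreover have "finite (p ` {..n} \<union> (\<Union>i<n. g -` {y} \<inter> {p i<..<p (Suc i)}))"
    using inj by (intro finite_UnI finite_imageI finite_UN_I finite_vimage_IntI) auto
  ultimately show ?thesis
    by (rule finite_subset)
qed

lemma space_unif01 [simp]: "space unif01 = {0..1}"
  by (simp add: unif01_def space_restrict_space)

lemma prob_space_unif01: "prob_space unif01"
  unfolding unif01_def
  by (rule prob_spaceI) (simp add: space_restrict_space emeasure_restrict_space)

lemma measure_unif01: "A \<subseteq> {0..1} \<Longrightarrow> measure unif01 A = measure lborel A"
  unfolding unif01_def by (simp add: measure_restrict_space)

lemma measurable_unif01:
  "continuous_on {0..1} g \<Longrightarrow> (g :: real \<Rightarrow> real) \<in> borel_measurable unif01"
  using borel_measurable_continuous_on_restrict[of "{0..1}" g] unfolding unif01_def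
  by (simp add: measurable_def sets_restrict_space space_restrict_space)

lemma real_distribution_distr_unif01:
  "continuous_on {0..1} g \<Longrightarrow> real_distribution (distr unif01 borel (g :: real \<Rightarrow> real))"
  by (simp add: real_distribution_def real_distribution_axioms_def measurable_unif01
      prob_space_unif01 prob_space.prob_space_distr)

lemma isCont_distfun:
  assumes "continuous_on {0..1} g" "pw_cont_strict_mono g"
  shows "isCont (distfun g) y"
proof -
  interpret real_distribution "distr unif01 borel g"
    using real_distribution_distr_unif01[OF assms(1)] .
  have "measure (distr unif01 borel g) {y} = measure unif01 (g -` {y} \<inter> {0..1})"
    using assms(1) by (simp add: measure_distr measurable_unif01)
  also have "\<dots> = measure lborel (g -` {y} \<inter> {0..1})"
    by (simp add: measure_unif01)
  also have "\<dots> = 0"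
    using pw_cont_strict_mono_finite_level_set[OF assms(2)]
    by (simp add: measure_def emeasure_lborel_countable countable_finite)
  finally show ?thesis
    unfolding distfun_def isCont_cdf .
qed

lemma distfun_strict_less:
  assumes "continuous_on {0..1} g" "0 \<le> lo" "lo < hi" "hi \<le> 1"
    and "\<And>w. w \<in> {lo<..<hi} \<Longrightarrow> g w \<in> {y<..y'}"
  shows "distfun g y < distfun g y'"
proof -
  interpret U: prob_space unif01
    by (rule prob_space_unif01)
  interpret real_distribution "distr unif01 borel g"
    using real_distribution_distr_unif01[OF assms(1)] .
  have "y < y'"
    using assms(3) assms(5)[of "(lo + hi) / 2"] by auto
  have "0 < measure unif01 {lo<..<hi}"
    using assms(2-4) by (subst measure_unif01) auto
  also have "\<dots> \<le> measure unif01 (g -` {y<..y'} \<inter> space unif01)"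
    using assms measurable_sets[OF measurable_unif01[OF assms(1)]] by (intro U.finite_measure_mono) auto
  also have "\<dots> = cdf (distr unif01 borel g) y' - cdf (distr unif01 borel g) y"
    using \<open>y < y'\<close> assms(1) by (simp add: cdf_diff_eq measure_distr measurable_unif01)
  finally show ?thesis
    unfolding distfun_def by simp
qed

lemma continuous_on_Tfun:
  assumes "continuous_on {0..1} g" "pw_cont_strict_mono g" "J \<subseteq> {0..1}"
  shows "continuous_on J (Tfun g)"
proof -
  have "continuous_on UNIV (distfun g)"
    using isCont_distfun[OF assms(1,2)] by (simp add: continuous_at_imp_continuous_on)
  then show ?thesis
    unfolding Tfun_def[abs_def] using continuous_on_subset[OF assms(1,3)]
    by (rule continuous_on_compose2) simp
qed

lemma inj_on_Tfun:
  assumes "continuous_on {0..1} g" "is_interval J" "J \<subseteq> {0..1}" "inj_on g J"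
  shows "inj_on (Tfun g) J"
proof (rule linorder_inj_onI')
  fix u u' assume u: "u \<in> J" "u' \<in> J" "u < u'"
  have sub: "{u..u'} \<subseteq> J"
    using mem_is_interval_1_I[OF assms(2) u(1,2)] by auto
  have cont: "continuous_on {u..u'} g"
    using continuous_on_subset[OF assms(1)] sub assms(3) by blast
  have between: "g w \<in> {min (g u) (g u')<..max (g u) (g u')}" if "w \<in> {u<..<u'}" for w
    using continuous_inj_imp_mono[OF _ _ cont inj_on_subset[OF assms(4) sub], of w] that by auto
  have "distfun g (min (g u) (g u')) < distfun g (max (g u) (g u'))"
  proof (rule distfun_strict_less[OF assms(1) _ \<open>u < u'\<close> _ between])
    show "0 \<le> u" "u' \<le> 1"
      using u assms(3) by auto
  qed
  then show "Tfun g u \<noteq> Tfun g u'"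
    unfolding Tfun_def by (cases "g u \<le> g u'") (simp_all add: min_def max_def)
qed

lemma regular_inj_on:
  assumes "regular g" "is_interval J" "J \<subseteq> {0<..<1}" "\<forall>u\<in>J. \<not> turning_point g u"
  shows "inj_on g J"
proof -
  have cont: "continuous_on {0..1} g"
    and diff: "\<forall>u\<in>{0<..<1}. g differentiable at u"
    and crit: "\<forall>u\<in>{0<..<1}. deriv g u = 0 \<longleftrightarrow> turning_point g u"
    using assms(1) unfolding regular_def by blast+
  show ?thesis
  proof (rule linorder_inj_onI')
    fix u u' assume u: "u \<in> J" "u' \<in> J" "u < u'"
    have sub: "{u..u'} \<subseteq> J"
      using mem_is_interval_1_I[OF assms(2) u(1,2)] by auto
    with assms(3) have "{u..u'} \<subseteq> {0..1}"
      by fastforce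
    show "g u \<noteq> g u'"
    proof
      assume "g u = g u'"
      moreover have "continuous_on {u..u'} g"
        using cont \<open>{u..u'} \<subseteq> {0..1}\<close> by (rule continuous_on_subset)
      moreover have "g differentiable at x" if "u < x" "x < u'" for x
      proof -
        have "x \<in> {0<..<1}"
          using sub assms(3) that by fastforce
        then show ?thesis
          using diff by blast
      qed
      ultimately obtain z where "u < z" "z < u'" "DERIV g z :> 0"
        using Rolle[OF \<open>u < u'\<close>] by blast
      then have "z \<in> J" "deriv g z = 0"
        using sub by (auto simp: DERIV_imp_deriv)
      then show False
        using crit assms(3,4) by blast
    qed
  qed
qed

lemma is_interval_vimage_continuous_inj:
  fixes T :: "real \<Rightarrow> real"
  assumes A: "is_interval A" "continuous_on A T" "inj_on T A" and "is_interval C"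
  shows "is_interval (A \<inter> T -` C)"
  unfolding is_interval_1
proof (intro ballI allI impI)
  fix u1 u2 x assume u: "u1 \<in> A \<inter> T -` C" "u2 \<in> A \<inter> T -` C" and x: "u1 \<le> x \<and> x \<le> u2"
  then have "u1 \<in> A" "u2 \<in> A" "T u1 \<in> C" "T u2 \<in> C"
    by simp_all
  then have sub: "{u1..u2} \<subseteq> A"
    using mem_is_interval_1_I[OF A(1)] by (meson atLeastAtMost_iff subsetI)
  have "T x \<in> C"
  proof (cases "x = u1 \<or> x = u2")
    case False
    then have "u1 < x" "x < u2"
      using x by auto
    from continuous_inj_imp_mono[OF this continuous_on_subset[OF A(2) sub] inj_on_subset[OF A(3) sub]]
    show ?thesis
      using mem_is_interval_1_I[OF \<open>is_interval C\<close>] \<open>T u1 \<in> C\<close> \<open>T u2 \<in> C\<close>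
      by (metis less_imp_le)
  qed (use \<open>T u1 \<in> C\<close> \<open>T u2 \<in> C\<close> in blast)
  then show "x \<in> A \<inter> T -` C"
    using sub x by (simp add: subset_iff)
qed

lemma level_set_is_monotone_graph:
  fixes T k :: "real \<Rightarrow> real"
  assumes A: "is_interval A" "continuous_on A T" "inj_on T A"
    and B: "open B" "is_interval B" "continuous_on B k" "inj_on k B"
  shows "\<exists>I \<phi>. is_interval I \<and> I \<subseteq> A \<and> continuous_on I \<phi> \<and>
           (strict_mono_on I \<phi> \<or> strict_antimono_on I \<phi>) \<and>
           {(u, v). u \<in> A \<and> v \<in> B \<and> T u = k v} = (\<lambda>u. (u, \<phi> u)) ` I"
proof -
  define I where "I = A \<inter> T -` k ` B"
  define \<phi> where "\<phi> = the_inv_into B k \<circ> T"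
  have "I \<subseteq> A"
    by (simp add: I_def)
  have \<phi>: "\<phi> u \<in> B" "k (\<phi> u) = T u" if "u \<in> I" for u
    using that B(4) unfolding I_def \<phi>_def by (auto simp: the_inv_into_f_f the_inv_into_into)
  have "is_interval I"
    unfolding I_def using A B(2,3)
    by (intro is_interval_vimage_continuous_inj)
      (simp_all add: is_interval_connected_1 connected_continuous_image)
  moreover have "continuous_on I \<phi>"
  proof -
    have "continuous_on (k ` B) (the_inv_into B k)"
      using B by (intro continuous_on_inverse_open) (auto simp: the_inv_into_f_f)
    moreover have "continuous_on I T"
      using A(2) \<open>I \<subseteq> A\<close> by (rule continuous_on_subset)
    ultimately show ?thesis
      unfolding \<phi>_def o_def by (rule continuous_on_compose2) (auto simp: I_def)
  qed
  moreover have "inj_on \<phi> I"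
  proof (rule inj_onI)
    fix u u' assume "u \<in> I" "u' \<in> I" "\<phi> u = \<phi> u'"
    then have "T u = T u'"
      using \<phi>(2) by metis
    then show "u = u'"
      using A(3) \<open>u \<in> I\<close> \<open>u' \<in> I\<close> \<open>I \<subseteq> A\<close> by (auto dest: inj_onD)
  qed
  moreover have "{(u, v). u \<in> A \<and> v \<in> B \<and> T u = k v} = (\<lambda>u. (u, \<phi> u)) ` I"
  proof (intro set_eqI iffI)
    fix p assume "p \<in> {(u, v). u \<in> A \<and> v \<in> B \<and> T u = k v}"
    then obtain u v where "p = (u, v)" "u \<in> A" "v \<in> B" "T u = k v"
      by blast
    moreover from this have "u \<in> I" "\<phi> u = v"
      using B(4) by (auto simp: I_def \<phi>_def the_inv_into_f_f)
    ultimately show "p \<in> (\<lambda>u. (u, \<phi> u)) ` I"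
      by auto
  next
    fix p assume "p \<in> (\<lambda>u. (u, \<phi> u)) ` I"
    then show "p \<in> {(u, v). u \<in> A \<and> v \<in> B \<and> T u = k v}"
      using \<phi> \<open>I \<subseteq> A\<close> by auto
  qed
  ultimately show ?thesis
    using injective_eq_monotone_map[of I \<phi>] \<open>I \<subseteq> A\<close> by blast
qed

lemma sorted_list_of_set_consecutive:
  fixes P :: "'a::linorder set"
  assumes "finite P" "Suc i < card P"
  defines "xs \<equiv> sorted_list_of_set P"
  shows "xs ! i < xs ! Suc i" "{xs ! i<..<xs ! Suc i} \<inter> P = {}"
proof -
  have xs: "sorted xs" "sorted_wrt (<) xs" "length xs = card P" "set xs = P"
    using assms(1) by (simp_all add: xs_def)
  then show "xs ! i < xs ! Suc i"
    using assms(2) by (simp add: sorted_wrt_nth_less)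
  show "{xs ! i<..<xs ! Suc i} \<inter> P = {}"
  proof (rule ccontr)
    assume "{xs ! i<..<xs ! Suc i} \<inter> P \<noteq> {}"
    then obtain k where k: "k < length xs" "xs ! i < xs ! k" "xs ! k < xs ! Suc i"
      using xs(4) by (auto simp: in_set_conv_nth)
    then show False
      using sorted_nth_mono[OF xs(1), of k i] sorted_nth_mono[OF xs(1), of "Suc i" k] assms(2) xs(3)
      by (cases "k \<le> i") auto
  qed
qed

lemma tp_part_interval:
  assumes "m \<in> {1..tp_num f}"
  shows "0 \<le> tp_part f (m - 1)" "tp_part f (m - 1) < tp_part f m" "tp_part f m \<le> 1"
    and "\<forall>u\<in>{tp_part f (m - 1)<..<tp_part f m}. \<not> turning_point f u"
proof -
  \<comment> \<open>card of an infinite set is 0, so the bound on m forces finitely many turning points\<close>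
  have "finite (tp_points f)" "Suc (m - 1) < card (tp_points f)"
    using assms unfolding tp_num_def by (auto intro: card_ge_0_finite)
  note consecutive = sorted_list_of_set_consecutive[OF this]
  have "tp_points f \<subseteq> {0..1}"
    unfolding tp_points_def turning_point_def by auto
  then have "tp_part f i \<in> {0..1}" if "i < card (tp_points f)" for i
    using that \<open>finite (tp_points f)\<close> unfolding tp_part_def
    by (metis nth_mem length_sorted_list_of_set set_sorted_list_of_set subsetD)
  then show "0 \<le> tp_part f (m - 1)" "tp_part f m \<le> 1"
    using \<open>Suc (m - 1) < card (tp_points f)\<close> assms by auto
  show "tp_part f (m - 1) < tp_part f m"
    using consecutive(1) assms unfolding tp_part_def by simp
  show "\<forall>u\<in>{tp_part f (m - 1)<..<tp_part f m}. \<not> turning_point f u"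
    using consecutive(2) assms unfolding tp_part_def tp_points_def by auto
qed

lemma Tfun_continuous_inj_on_tp_interval:
  assumes "pw_cont_strict_mono f" "regular f" "m \<in> {1..tp_num f}"
  defines "J \<equiv> {tp_part f (m - 1)<..<tp_part f m}"
  shows "J \<subseteq> {0..1}" "continuous_on J (Tfun f)" "inj_on (Tfun f) J"
proof -
  have "J \<subseteq> {0<..<1}"
    using tp_part_interval(1,3)[OF assms(3)] unfolding J_def by auto
  then show "J \<subseteq> {0..1}"
    by auto
  have "continuous_on {0..1} f"
    using assms(2) unfolding regular_def by blast
  show "continuous_on J (Tfun f)"
    by (rule continuous_on_Tfun) fact+
  have "inj_on f J"
    using assms(2) \<open>J \<subseteq> {0<..<1}\<close> tp_part_interval(4)[OF assms(3)]
    unfolding J_def by (intro regular_inj_on) auto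
  then show "inj_on (Tfun f) J"
    using \<open>continuous_on {0..1} f\<close> \<open>J \<subseteq> {0..1}\<close>
    by (intro inj_on_Tfun) (simp_all add: J_def is_interval_1)
qed

theorem proposition8:
  fixes g h :: "real \<Rightarrow> real"
  assumes "pw_cont_strict_mono g" and "regular g"
    and "pw_cont_strict_mono h" and "regular h"
    and "m1 \<in> {1..tp_num g}" and "m2 \<in> {1..tp_num h}"
    and "S \<in> {S_max g h, S_min g h}"
    and "S \<inter> ({tp_part g (m1 - 1)<..<tp_part g m1} \<times> {tp_part h (m2 - 1)<..<tp_part h m2}) \<noteq> {}"
  shows "\<exists>(I :: real set) (\<phi> :: real \<Rightarrow> real).
           is_interval I \<and> I \<subseteq> {tp_part g (m1 - 1)<..<tp_part g m1} \<and>
           continuous_on I \<phi> \<and> (strict_mono_on I \<phi> \<or> strict_antimono_on I \<phi>) \<and>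
           S \<inter> ({tp_part g (m1 - 1)<..<tp_part g m1} \<times> {tp_part h (m2 - 1)<..<tp_part h m2})
             = (\<lambda>u. (u, \<phi> u)) ` I"
proof -
  define J1 where "J1 = {tp_part g (m1 - 1)<..<tp_part g m1}"
  define J2 where "J2 = {tp_part h (m2 - 1)<..<tp_part h m2}"
  note Tg = Tfun_continuous_inj_on_tp_interval[OF assms(1,2,5), folded J1_def]
  note Th = Tfun_continuous_inj_on_tp_interval[OF assms(3,4,6), folded J2_def]
  obtain k where k: "continuous_on J2 k" "inj_on k J2"
    and S: "S \<inter> (J1 \<times> J2) = {(u, v). u \<in> J1 \<and> v \<in> J2 \<and> Tfun g u = k v}"
  proof (cases "S = S_max g h")
    case True
    then have "S \<inter> (J1 \<times> J2) = {(u, v). u \<in> J1 \<and> v \<in> J2 \<and> Tfun g u = Tfun h v}"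
      using Tg(1) Th(1) unfolding S_max_def by auto
    then show ?thesis
      using that Th(2,3) by blast
  next
    case False
    then have "S \<inter> (J1 \<times> J2) = {(u, v). u \<in> J1 \<and> v \<in> J2 \<and> Tfun g u = 1 - Tfun h v}"
      using assms(7) Tg(1) Th(1) unfolding S_min_def by auto
    moreover have "continuous_on J2 (\<lambda>v. 1 - Tfun h v)" "inj_on (\<lambda>v. 1 - Tfun h v) J2"
      using Th(2,3) by (auto intro: continuous_intros simp: inj_on_def)
    ultimately show ?thesis
      using that by blast
  qed
  have "is_interval J1" "is_interval J2" "open J2"
    by (simp_all add: J1_def J2_def is_interval_1)
  from level_set_is_monotone_graph[OF this(1) Tg(2,3) this(3,2) k, folded S] show ?thesis
    unfolding J1_def J2_def .
qed

end
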